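(* Suppose $\theta_k>0$ for all $k=1,\dots,K$. Then $$\lim_{t\to\infty}t\big[1-F\{q_1(t),\dots,q_{n_s}(t)\}\big]=n_s,$$ i.e. the $n_s$-dimensional extremal coefficient $V(1,\dots,1)$ equals $n_s$ (joint extremal independence).
   Context: Standing model. Fix $\alpha\in(0,1)$, $\alpha_0>0$, $\tau>0$, an integer $K\ge1$ and tilting parameters $\theta_1,\dots,\theta_K\ge0$. Fix locations $\boldsymbol s_1,\dots,\boldsymbol s_{n_s}$ and nonnegative weights $\omega_{kj}$ with $\{k:\omega_{kj}\ne0\}\neq\emptyset$ for every $j$. Let $Z_1,\dots,Z_K$ be independent positive random variables with $E[e^{-sZ_k}]=\exp[-\{(\theta_k+s)^\alpha-\theta_k^\alpha\}]$, $s\ge0$. Let $\epsilon_1,\dots,\epsilon_{n_s}$ be i.i.d., independent of the $Z_k$, with $\Pr(\epsilon_j\le x)=\exp\{-(x/\tau)^{-1/\alpha_0}\}$, $x>0$. Define $X_j=\epsilon_j\big(\sum_{k=1}^K\omega_{kj}^{1/\alpha}Z_k\big)^{\alpha_0}$, $F_j$ its distribution function, $q_j(t)=F_j^{-1}(1-1/t)$, and $F$ the joint distribution function of $(X_1,\dots,X_{n_s})$. *)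

theory Defs
  imports "HOL-Probability.Probability"
begin

definition cdf_rv :: "'a measure \<Rightarrow> ('a \<Rightarrow> real) \<Rightarrow> real \<Rightarrow> real" where
  "cdf_rv M X x = measure M {\<omega> \<in> space M. X \<omega> \<le> x}"

definition gen_inv :: "(real \<Rightarrow> real) \<Rightarrow> real \<Rightarrow> real" where
  "gen_inv G p = Inf {x. p \<le> G x}"

definition joint_cdf :: "'a measure \<Rightarrow> (nat \<Rightarrow> 'a \<Rightarrow> real) \<Rightarrow> nat \<Rightarrow> (nat \<Rightarrow> real) \<Rightarrow> real" where
  "joint_cdf M X n x = measure M {\<omega> \<in> space M. \<forall>j\<in>{1..n}. X j \<omega> \<le> x j}"

definition model_X :: "real \<Rightarrow> real \<Rightarrow> nat \<Rightarrow> (nat \<Rightarrow> nat \<Rightarrow> real)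
    \<Rightarrow> (nat \<Rightarrow> 'a \<Rightarrow> real) \<Rightarrow> (nat \<Rightarrow> 'a \<Rightarrow> real) \<Rightarrow> nat \<Rightarrow> 'a \<Rightarrow> real" where
  "model_X \<alpha> \<alpha>0 K w Z eps j \<omega> =
     eps j \<omega> * (\<Sum>k=1..K. w k j powr (1/\<alpha>) * Z k \<omega>) powr \<alpha>0"

end

theory Submission
  imports Defs
begin

text \<open>
  Write \<open>S_j = \<Sum>_k w_kj^(1/\<alpha>) Z_k\<close>, so that \<open>X_j = \<epsilon>_j S_j^\<alpha>0\<close>. Since \<open>S_j > 0\<close> and
  \<open>\<epsilon>_j\<close> is Frechet, \<open>P(X_j > x) \<ge> c x^(-1/\<alpha>0)\<close> for large \<open>x\<close>, hence
  \<open>q_j(t)^(-1/\<alpha>0) = O(1/t)\<close>. Because every \<open>\<theta>_k > 0\<close>, the Laplace transform of \<open>Z_k\<close> is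
  smooth at 0, so \<open>Z_k\<close> and \<open>S_j\<close> have finite second moments and \<open>P(S_j > r) = o(r^-2)\<close>.
  For \<open>i \<noteq> j\<close>, a joint exceedance of \<open>q_i(t)\<close> and \<open>q_j(t)\<close> needs either a scale above
  \<open>m = d \<surd>t\<close>, of probability \<open>o(1/t)\<close>, or both independent noises above \<open>q/m^\<alpha>0\<close>, of
  probability \<open>O(m^2/t^2) = O(d^2/t)\<close>. Letting \<open>d \<rightarrow> 0\<close> gives
  \<open>t P(X_i > q_i(t), X_j > q_j(t)) \<rightarrow> 0\<close>, and the Bonferroni inequalities turn
  \<open>t P(X_j > q_j(t)) = 1\<close> into the limit \<open>n_s\<close>.
\<close>

section \<open>Independence, atoms and tails\<close>

lemma (in prob_space) prob_indep_var_conj: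
  assumes "indep_var borel U borel V" "A \<in> sets borel" "B \<in> sets borel"
  shows "prob {\<omega>\<in>space M. U \<omega> \<in> A \<and> V \<omega> \<in> B}
       = prob {\<omega>\<in>space M. U \<omega> \<in> A} * prob {\<omega>\<in>space M. V \<omega> \<in> B}"
proof -
  have "prob {\<omega>\<in>space M. U \<omega> \<in> A \<and> V \<omega> \<in> B} = prob ((\<lambda>\<omega>. (U \<omega>, V \<omega>)) -` (A \<times> B) \<inter> space M)"
    by (auto intro!: arg_cong[where f=prob])
  also have "\<dots> = prob (U -` A \<inter> space M) * prob (V -` B \<inter> space M)"
    using assms by (intro indep_varD) auto
  finally show ?thesis
    by (simp add: vimage_def Int_def conj_commute)
qed

lemma (in prob_space) prob_UN_Bonferroni:
  assumes "finite I" "\<And>i. i \<in> I \<Longrightarrow> A i \<in> events"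
  shows "(\<Sum>i\<in>I. prob (A i)) - (\<Sum>i\<in>I. \<Sum>j\<in>I-{i}. prob (A i \<inter> A j)) \<le> prob (\<Union>i\<in>I. A i)"
  using assms
proof (induction I rule: finite_induct)
  case empty
  then show ?case by simp
next
  case (insert a F)
  let ?U = "\<Union>i\<in>F. A i"
  have events: "A a \<in> events" "?U \<in> events"
    using insert by auto
  have "insert a F - {i} = insert a (F - {i})" if "i \<in> F" for i
    using that insert.hyps by auto
  then have "(\<Sum>i\<in>insert a F. \<Sum>j\<in>insert a F-{i}. prob (A i \<inter> A j))
      = (\<Sum>j\<in>F. prob (A a \<inter> A j)) + (\<Sum>i\<in>F. prob (A i \<inter> A a) + (\<Sum>j\<in>F-{i}. prob (A i \<inter> A j)))"
    using insert.hyps by (simp add: Diff_insert_absorb)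
  also have "\<dots> \<ge> (\<Sum>j\<in>F. prob (A a \<inter> A j)) + (\<Sum>i\<in>F. \<Sum>j\<in>F-{i}. prob (A i \<inter> A j))"
    by (intro add_left_mono sum_mono) auto
  finally have pairs: "(\<Sum>j\<in>F. prob (A a \<inter> A j)) + (\<Sum>i\<in>F. \<Sum>j\<in>F-{i}. prob (A i \<inter> A j))
      \<le> (\<Sum>i\<in>insert a F. \<Sum>j\<in>insert a F-{i}. prob (A i \<inter> A j))" .
  have "A a \<inter> ?U = (\<Union>j\<in>F. A a \<inter> A j)"
    by blast
  then have "prob (A a \<inter> ?U) = prob (\<Union>j\<in>F. A a \<inter> A j)"
    by simp
  also have "\<dots> \<le> (\<Sum>j\<in>F. prob (A a \<inter> A j))"
    using insert by (intro finite_measure_subadditive_finite) auto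
  finally have "prob (A a \<inter> ?U) \<le> (\<Sum>j\<in>F. prob (A a \<inter> A j))" .
  moreover have "prob (A a \<union> ?U) = prob (A a) + prob ?U - prob (A a \<inter> ?U)"
    using events by (intro measure_Un3) (auto simp: fmeasurable_eq_sets)
  moreover have "(\<Sum>i\<in>F. prob (A i)) - (\<Sum>i\<in>F. \<Sum>j\<in>F-{i}. prob (A i \<inter> A j)) \<le> prob ?U"
    using insert by auto
  ultimately show ?case
    using pairs insert.hyps by simp
qed

lemma (in prob_space) prob_indep_mult_atomless:
  fixes U V :: "'a \<Rightarrow> real"
  assumes indep: "indep_var borel U borel V"
    and atomless: "\<And>c. prob {\<omega>\<in>space M. V \<omega> = c} = 0"
    and "x \<noteq> 0"
  shows "prob {\<omega>\<in>space M. V \<omega> * U \<omega> = x} = 0"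
proof -
  let ?DU = "distr M borel U" and ?DV = "distr M borel V"
  have [measurable]: "U \<in> borel_measurable M" "V \<in> borel_measurable M"
    using indep_var_rv1[OF indep] indep_var_rv2[OF indep] by auto
  interpret DU: prob_space ?DU by (simp add: prob_space_distr)
  interpret DV: prob_space ?DV by (simp add: prob_space_distr)
  interpret pair_sigma_finite ?DU ?DV ..
  define B where "B = (\<lambda>p::real \<times> real. snd p * fst p) -` {x} \<inter> space (borel \<Otimes>\<^sub>M borel)"
  have "(\<lambda>p::real \<times> real. snd p * fst p) \<in> borel_measurable (borel \<Otimes>\<^sub>M borel)"
    by measurable
  then have B [measurable]: "B \<in> sets (borel \<Otimes>\<^sub>M borel)"
    unfolding B_def by (rule measurable_sets) simp
  have "emeasure M {\<omega>\<in>space M. V \<omega> * U \<omega> = x} = emeasure (distr M (borel \<Otimes>\<^sub>M borel) (\<lambda>\<omega>. (U \<omega>, V \<omega>))) B"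
    by (subst emeasure_distr[OF _ B]) (auto simp: B_def space_pair_measure intro!: arg_cong[where f="emeasure M"])
  also have "\<dots> = emeasure (?DU \<Otimes>\<^sub>M ?DV) B"
    using indep by (simp add: indep_var_distribution_eq)
  also have "\<dots> = (\<integral>\<^sup>+ u. emeasure ?DV (Pair u -` B) \<partial>?DU)"
    by (simp add: DV.emeasure_pair_measure_alt)
  also have "\<dots> = (\<integral>\<^sup>+ u. 0 \<partial>?DU)"
  proof (intro nn_integral_cong)
    fix u :: real
    show "emeasure ?DV (Pair u -` B) = 0"
    proof (cases "u = 0")
      case True
      then have "Pair u -` B = {}"
        using \<open>x \<noteq> 0\<close> by (auto simp: B_def)
      then show ?thesis by simp
    next
      case False
      then have "Pair u -` B = {x / u}"
        by (auto simp: B_def space_pair_measure field_simps)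
      then show ?thesis
        using atomless[of "x / u"] by (simp add: emeasure_distr emeasure_eq_measure vimage_def Int_def conj_commute)
    qed
  qed
  finally show ?thesis
    by (simp add: emeasure_eq_measure)
qed

lemma (in prob_space) cdf_distr_eq_cdf_rv:
  "X \<in> borel_measurable M \<Longrightarrow> cdf (distr M borel X) = cdf_rv M X"
  by (auto simp: fun_eq_iff cdf_def cdf_rv_def measure_distr vimage_def Int_def conj_commute
      intro!: arg_cong[where f=prob])

lemma (in prob_space) cdf_rv_gen_inv:
  assumes [measurable]: "X \<in> borel_measurable M"
    and atomless: "\<And>c. prob {\<omega>\<in>space M. X \<omega> = c} = 0"
    and p: "0 < p" "p < 1"
  shows "cdf_rv M X (gen_inv (cdf_rv M X) p) = p"
proof -
  let ?D = "distr M borel X"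
  interpret D: real_distribution ?D by simp
  define A where "A = {x. p \<le> cdf ?D x}"
  have "eventually (\<lambda>x. p < cdf ?D x) at_top"
    using D.cdf_lim_at_top_prob p(2) by (simp add: order_tendsto_iff)
  then have "A \<noteq> {}"
    by (auto simp: A_def eventually_at_top_linorder intro: less_imp_le)
  have "eventually (\<lambda>x. cdf ?D x < p) at_bot"
    using D.cdf_lim_at_bot p(1) by (simp add: order_tendsto_iff)
  then obtain b where b: "\<And>x. x \<le> b \<Longrightarrow> cdf ?D x < p"
    by (auto simp: eventually_at_bot_linorder)
  have "bdd_below A"
    by (rule bdd_belowI[of _ b]) (metis A_def b mem_Collect_eq less_imp_le not_less)
  have "p \<le> cdf ?D (Inf A)"
  proof (rule tendsto_lowerbound)
    show "(cdf ?D \<longlongrightarrow> cdf ?D (Inf A)) (at_right (Inf A))"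
      using D.cdf_is_right_cont by (simp add: continuous_within)
    show "eventually (\<lambda>x. p \<le> cdf ?D x) (at_right (Inf A))"
    proof (intro eventually_at_rightI[of "Inf A" "Inf A + 1"])
      fix x assume "x \<in> {Inf A<..<Inf A + 1}"
      then obtain a where "a \<in> A" "a < x"
        using cInf_less_iff[OF \<open>A \<noteq> {}\<close> \<open>bdd_below A\<close>] by auto
      then show "p \<le> cdf ?D x"
        unfolding A_def using D.cdf_nondecreasing[of a x] by auto
    qed simp
  qed simp
  moreover have "cdf ?D (Inf A) \<le> p"
  proof (rule tendsto_upperbound)
    have "measure ?D {Inf A} = 0"
      using atomless[of "Inf A"] by (simp add: measure_distr vimage_def Int_def conj_commute)
    then have "isCont (cdf ?D) (Inf A)"
      using D.isCont_cdf by simp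
    then show "(cdf ?D \<longlongrightarrow> cdf ?D (Inf A)) (at_left (Inf A))"
      by (simp add: isCont_def filterlim_at_split)
    show "eventually (\<lambda>x. cdf ?D x \<le> p) (at_left (Inf A))"
    proof (intro eventually_at_leftI[of "Inf A - 1" "Inf A"])
      fix x assume "x \<in> {Inf A - 1<..<Inf A}"
      then have "x \<notin> A"
        using cInf_lower[OF _ \<open>bdd_below A\<close>, of x] by auto
      then show "cdf ?D x \<le> p"
        unfolding A_def by simp
    qed simp
  qed simp
  ultimately show ?thesis
    by (simp add: gen_inv_def A_def cdf_distr_eq_cdf_rv)
qed

lemma (in prob_space) square_tail_tendsto_zero:
  assumes [measurable]: "X \<in> borel_measurable M"
    and int: "integrable M (\<lambda>\<omega>. (X \<omega>)\<^sup>2)"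
  shows "((\<lambda>r. r\<^sup>2 * prob {\<omega>\<in>space M. r < X \<omega>}) \<longlongrightarrow> 0) at_top"
proof -
  define g where "g r \<omega> = (if r < X \<omega> then (X \<omega>)\<^sup>2 else 0)" for r \<omega>
  have [measurable]: "g r \<in> borel_measurable M" for r
    unfolding g_def by measurable
  have int_g: "integrable M (g r)" for r
    using int by (rule Bochner_Integration.integrable_bound) (auto simp: g_def)
  have lim: "((\<lambda>r. integral\<^sup>L M (g r)) \<longlongrightarrow> integral\<^sup>L M (\<lambda>\<omega>. 0::real)) at_top"
  proof (rule integral_dominated_convergence_at_top[where w="\<lambda>\<omega>. (X \<omega>)\<^sup>2"])
    show "AE \<omega> in M. ((\<lambda>r. g r \<omega>) \<longlongrightarrow> 0) at_top"
    proof (intro AE_I2 tendsto_eventually)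
      fix \<omega>
      show "eventually (\<lambda>r. g r \<omega> = 0) at_top"
        unfolding g_def eventually_at_top_linorder by (intro exI[of _ "X \<omega>"]) auto
    qed
  qed (auto intro!: always_eventually simp: g_def int)
  have "eventually (\<lambda>r. r\<^sup>2 * prob {\<omega>\<in>space M. r < X \<omega>} \<le> integral\<^sup>L M (g r)) at_top"
    using eventually_ge_at_top[of 0]
  proof eventually_elim
    case (elim r)
    have "r\<^sup>2 * prob {\<omega>\<in>space M. r < X \<omega>} = integral\<^sup>L M (\<lambda>\<omega>. r\<^sup>2 * indicator {\<omega>\<in>space M. r < X \<omega>} \<omega>)"
      by simp
    also have "\<dots> \<le> integral\<^sup>L M (g r)"
      using elim int_g
      by (intro integral_mono integrable_mult_right integrable_real_indicator)
         (auto simp: g_def indicator_def less_top[symmetric] intro!: power_mono)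
    finally show ?case .
  qed
  then show ?thesis
    by (intro tendsto_sandwich[OF _ _ tendsto_const lim[simplified]]) (auto intro!: always_eventually)
qed

lemma (in prob_space) AE_pos_imp_prob_ge_pos:
  fixes Y :: "'a \<Rightarrow> real"
  assumes [measurable]: "Y \<in> borel_measurable M"
    and "AE \<omega> in M. 0 < Y \<omega>"
  obtains s where "0 < s" "0 < prob {\<omega>\<in>space M. s \<le> Y \<omega>}"
proof -
  define A where "A n = {\<omega>\<in>space M. 1 / real (Suc n) \<le> Y \<omega>}" for n
  have "range A \<subseteq> events"
    unfolding A_def by auto
  moreover have "incseq A"
    unfolding A_def incseq_def by (auto elim!: order_trans[rotated] simp: frac_le)
  moreover have "(\<Union>n. A n) = {\<omega>\<in>space M. 0 < Y \<omega>}"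
  proof safe
    fix \<omega> assume "\<omega> \<in> space M" "0 < Y \<omega>"
    then obtain n where "1 / real (Suc n) < Y \<omega>"
      by (metis inverse_eq_divide reals_Archimedean)
    then show "\<omega> \<in> (\<Union>n. A n)"
      using \<open>\<omega> \<in> space M\<close> by (auto simp: A_def intro!: exI[of _ n])
  qed (auto simp: A_def elim: less_le_trans[rotated])
  moreover have "prob {\<omega>\<in>space M. 0 < Y \<omega>} = 1"
    using assms by (intro prob_Collect_eq_1[THEN iffD2]) auto
  ultimately have "(\<lambda>n. prob (A n)) \<longlonglongrightarrow> 1"
    using finite_Lim_measure_incseq by metis
  then have "eventually (\<lambda>n. 0 < prob (A n)) sequentially"
    by (simp add: order_tendsto_iff)
  then obtain n where "0 < prob (A n)"
    by (auto simp: eventually_sequentially)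
  then show thesis
    by (intro that[of "1 / real (Suc n)"]) (auto simp: A_def)
qed

section \<open>Second moments from the Laplace transform\<close>

lemma second_difference_le:
  fixes f :: "real \<Rightarrow> real"
  assumes f': "\<And>x. 0 \<le> x \<Longrightarrow> (f has_real_derivative f' x) (at x)"
    and f'': "\<And>x. 0 \<le> x \<Longrightarrow> (f' has_real_derivative f'' x) (at x)"
    and bound: "\<And>x. 0 \<le> x \<Longrightarrow> f'' x \<le> B"
    and s: "0 < s"
  shows "f 0 - 2 * f s + f (2 * s) \<le> B * s\<^sup>2"
proof -
  define g where "g x = f (x + s) - f x" for x
  have "(g has_real_derivative f' (x + s) - f' x) (at x)" if "0 \<le> x" for x
    unfolding g_def using that s
    by (auto intro!: derivative_eq_intros DERIV_chain2[OF f'])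
  then obtain \<xi> where \<xi>: "0 < \<xi>" "\<xi> < s" "g s - g 0 = s * (f' (\<xi> + s) - f' \<xi>)"
    using MVT2[of 0 s g "\<lambda>x. f' (x + s) - f' x"] s by auto
  obtain \<eta> where \<eta>: "\<xi> < \<eta>" "f' (\<xi> + s) - f' \<xi> = s * f'' \<eta>"
    using MVT2[of \<xi> "\<xi> + s" f' f''] f'' \<xi> s by auto
  have "f 0 - 2 * f s + f (2 * s) = s\<^sup>2 * f'' \<eta>"
    using \<xi>(3) \<eta>(2) by (simp add: g_def power2_eq_square algebra_simps)
  also have "\<dots> \<le> s\<^sup>2 * B"
    using bound[of \<eta>] \<eta>(1) \<xi>(1) by (intro mult_left_mono) auto
  finally show ?thesis
    by (simp add: mult.commute)
qed

text \<open>For \<open>\<theta> = 0\<close> (an untilted stable law) no such bound holds: its second moment is infinite.\<close>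

lemma tilted_stable_laplace_second_difference:
  fixes \<theta> \<alpha> :: real
  assumes \<theta>: "0 < \<theta>" and \<alpha>: "0 < \<alpha>" "\<alpha> < 1"
  defines "L \<equiv> \<lambda>s. exp (- ((\<theta> + s) powr \<alpha> - \<theta> powr \<alpha>))"
  obtains C where "\<And>s. 0 < s \<Longrightarrow> 1 - 2 * L s + L (2 * s) \<le> C * s\<^sup>2"
proof -
  define p1 where "p1 x = \<alpha> * (\<theta> + x) powr (\<alpha> - 1)" for x
  define p2 where "p2 x = \<alpha> * (\<alpha> - 1) * (\<theta> + x) powr (\<alpha> - 2)" for x
  define B where "B = (\<alpha> * \<theta> powr (\<alpha> - 1))\<^sup>2 + \<alpha> * (1 - \<alpha>) * \<theta> powr (\<alpha> - 2)"
  have L': "(L has_real_derivative - p1 x * L x) (at x)" if "0 \<le> x" for x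
    using that \<theta> unfolding L_def p1_def by (auto intro!: derivative_eq_intros)
  have p1': "(p1 has_real_derivative p2 x) (at x)" if "0 \<le> x" for x
    using that \<theta> unfolding p1_def p2_def
    by (auto intro!: derivative_eq_intros simp: diff_diff_eq)
  have L'': "((\<lambda>x. - p1 x * L x) has_real_derivative ((p1 x)\<^sup>2 - p2 x) * L x) (at x)" if "0 \<le> x" for x
    using DERIV_minus[OF DERIV_mult[OF p1'[OF that] L'[OF that]]]
    by (simp add: power2_eq_square algebra_simps)
  have "((p1 x)\<^sup>2 - p2 x) * L x \<le> B" if "0 \<le> x" for x
  proof -
    have "0 \<le> p1 x" "p1 x \<le> \<alpha> * \<theta> powr (\<alpha> - 1)"
      unfolding p1_def using that \<theta> \<alpha> by (auto intro!: mult_left_mono powr_mono2')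
    then have p1_sq: "(p1 x)\<^sup>2 \<le> (\<alpha> * \<theta> powr (\<alpha> - 1))\<^sup>2"
      by (intro power_mono)
    have "(\<theta> + x) powr (\<alpha> - 2) \<le> \<theta> powr (\<alpha> - 2)"
      using that \<theta> \<alpha> by (intro powr_mono2') auto
    then have "\<alpha> * (1 - \<alpha>) * (\<theta> + x) powr (\<alpha> - 2) \<le> \<alpha> * (1 - \<alpha>) * \<theta> powr (\<alpha> - 2)"
      using \<alpha> by (intro mult_left_mono) auto
    moreover have "- p2 x = \<alpha> * (1 - \<alpha>) * (\<theta> + x) powr (\<alpha> - 2)"
      by (simp add: p2_def algebra_simps)
    moreover have "0 \<le> \<alpha> * (1 - \<alpha>) * (\<theta> + x) powr (\<alpha> - 2)"
      using \<alpha> by simp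
    ultimately have "0 \<le> (p1 x)\<^sup>2 - p2 x" "(p1 x)\<^sup>2 - p2 x \<le> B"
      using p1_sq zero_le_power2[of "p1 x"] unfolding B_def by linarith+
    moreover have "0 < L x" "L x \<le> 1"
      using that \<theta> \<alpha> unfolding L_def by (auto intro!: powr_mono2)
    ultimately show ?thesis
      by (metis mult_left_le order_trans)
  qed
  then have "1 - 2 * L s + L (2 * s) \<le> B * s\<^sup>2" if "0 < s" for s
    using second_difference_le[OF L' L'' _ that] by (simp add: L_def)
  then show thesis
    by (rule that)
qed

lemma (in prob_space) integrable_of_tendsto_bounded_expectation:
  fixes f :: "nat \<Rightarrow> 'a \<Rightarrow> real"
  assumes [measurable]: "g \<in> borel_measurable M"
    and int: "\<And>n. integrable M (f n)"
    and nonneg: "\<And>n \<omega>. 0 \<le> f n \<omega>"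
    and bound: "\<And>n. expectation (f n) \<le> C"
    and lim: "\<And>\<omega>. (\<lambda>n. f n \<omega>) \<longlonglongrightarrow> g \<omega>"
  shows "integrable M g"
proof -
  have "(\<integral>\<^sup>+ \<omega>. ennreal (norm (g \<omega>)) \<partial>M) = (\<integral>\<^sup>+ \<omega>. liminf (\<lambda>n. ennreal (f n \<omega>)) \<partial>M)"
  proof (intro nn_integral_cong)
    fix \<omega>
    have "0 \<le> g \<omega>"
      using nonneg by (intro LIMSEQ_le_const[OF lim]) auto
    moreover have "(\<lambda>n. ennreal (f n \<omega>)) \<longlonglongrightarrow> ennreal (g \<omega>)"
      using lim by (rule tendsto_ennrealI)
    ultimately show "ennreal (norm (g \<omega>)) = liminf (\<lambda>n. ennreal (f n \<omega>))"
      by (simp add: lim_imp_Liminf)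
  qed
  also have "\<dots> \<le> liminf (\<lambda>n. \<integral>\<^sup>+ \<omega>. ennreal (f n \<omega>) \<partial>M)"
    using int by (intro nn_integral_liminf) auto
  also have "\<dots> \<le> ennreal C"
  proof (intro Liminf_le always_eventually allI)
    fix n
    have "(\<integral>\<^sup>+ \<omega>. ennreal (f n \<omega>) \<partial>M) = ennreal (expectation (f n))"
      using nonneg by (intro nn_integral_eq_integral int) auto
    then show "(\<integral>\<^sup>+ \<omega>. ennreal (f n \<omega>) \<partial>M) \<le> ennreal C"
      using bound by (simp add: ennreal_leI)
  qed simp
  finally show ?thesis
    by (intro integrableI_bounded) (auto simp: top.not_eq_extremum intro: le_less_trans)
qed

lemma (in prob_space) integrable_square_of_laplace_second_difference:
  fixes Z :: "'a \<Rightarrow> real" and L :: "real \<Rightarrow> real"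
  assumes [measurable]: "Z \<in> borel_measurable M"
    and nonneg: "AE \<omega> in M. 0 \<le> Z \<omega>"
    and laplace: "\<And>s. 0 \<le> s \<Longrightarrow> expectation (\<lambda>\<omega>. exp (- s * Z \<omega>)) = L s"
    and second_difference: "\<And>s. 0 < s \<Longrightarrow> 1 - 2 * L s + L (2 * s) \<le> C * s\<^sup>2"
  shows "integrable M (\<lambda>\<omega>. (Z \<omega>)\<^sup>2)"
proof -
  have int_exp: "integrable M (\<lambda>\<omega>. exp (- s * Z \<omega>))" if "0 \<le> s" for s
  proof (rule integrable_const_bound[where B=1])
    show "AE \<omega> in M. norm (exp (- s * Z \<omega>)) \<le> 1"
      using nonneg by eventually_elim (use that in \<open>auto intro!: mult_nonneg_nonneg\<close>)
  qed simp
  \<comment> \<open>The second difference of the Laplace transform at step 1/n is the mean of these.\<close>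
  define f where "f n \<omega> = (real (Suc n) * (1 - exp (- Z \<omega> / real (Suc n))))\<^sup>2" for n \<omega>
  have f_bound: "expectation (f n) \<le> C" for n
  proof -
    define s where "s = 1 / real (Suc n)"
    have f_eq: "f n = (\<lambda>\<omega>. (real (Suc n))\<^sup>2 * (1 - 2 * exp (- s * Z \<omega>) + exp (- (2 * s) * Z \<omega>)))"
      by (auto simp: fun_eq_iff f_def s_def power2_eq_square algebra_simps simp flip: exp_add)
    have "s > 0"
      by (simp add: s_def)
    then have "expectation (f n) = (real (Suc n))\<^sup>2 * (1 - 2 * L s + L (2 * s))"
      unfolding f_eq using int_exp laplace by (simp add: prob_space)
    also have "\<dots> \<le> (real (Suc n))\<^sup>2 * (C * s\<^sup>2)"
      using second_difference[OF \<open>s > 0\<close>] by (intro mult_left_mono) auto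
    finally show ?thesis
      by (simp add: s_def power2_eq_square)
  qed
  have f_integrable: "integrable M (f n)" for n
  proof (rule integrable_const_bound[where B="(real (Suc n))\<^sup>2"])
    show "AE \<omega> in M. norm (f n \<omega>) \<le> (real (Suc n))\<^sup>2"
      using nonneg by eventually_elim (auto simp: f_def power_mult_distrib intro!: mult_left_le power_le_one)
  qed (unfold f_def, measurable)
  have f_tendsto: "(\<lambda>n. f n \<omega>) \<longlonglongrightarrow> (Z \<omega>)\<^sup>2" for \<omega>
  proof -
    have "(\<lambda>n. real (Suc n) * (1 - exp (- Z \<omega> / real (Suc n)))) \<longlonglongrightarrow> Z \<omega>"
      by real_asymp
    then show ?thesis
      unfolding f_def by (rule tendsto_power)
  qed
  have "0 \<le> f n \<omega>" for n \<omega>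
    by (simp add: f_def)
  from integrable_of_tendsto_bounded_expectation[OF _ f_integrable this f_bound f_tendsto]
  show ?thesis
    by simp
qed

section \<open>The Frechet distribution\<close>

definition frechet_cdf :: "real \<Rightarrow> real \<Rightarrow> real \<Rightarrow> real" where
  "frechet_cdf \<tau> \<alpha>0 x = exp (- ((x / \<tau>) powr (- 1 / \<alpha>0)))"

lemma frechet_tail_le: "1 - frechet_cdf \<tau> \<alpha>0 x \<le> (x / \<tau>) powr (- 1 / \<alpha>0)"
  unfolding frechet_cdf_def using exp_ge_add_one_self[of "- ((x / \<tau>) powr (- 1 / \<alpha>0))"] by linarith

lemma frechet_tail_ge:
  assumes "0 < \<tau>" "0 < \<alpha>0" "\<tau> \<le> x"
  shows "(x / \<tau>) powr (- 1 / \<alpha>0) / 2 \<le> 1 - frechet_cdf \<tau> \<alpha>0 x"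
proof -
  define u where "u = (x / \<tau>) powr (- 1 / \<alpha>0)"
  have "1 \<le> x / \<tau>"
    using assms by simp
  then have "u \<le> (x / \<tau>) powr 0"
    unfolding u_def using assms by (intro powr_mono) auto
  then have "0 \<le> u" "u \<le> 1"
    using assms by (auto simp: u_def)
  have "exp (- u) \<le> 1 / (1 + u)"
    using exp_ge_add_one_self[of u] \<open>0 \<le> u\<close> by (simp add: exp_minus divide_simps)
  also have "\<dots> \<le> 1 - u / 2"
    using \<open>0 \<le> u\<close> \<open>u \<le> 1\<close> mult_left_le[of u u] by (simp add: field_simps)
  finally show ?thesis
    by (simp add: frechet_cdf_def u_def)
qed

lemma isCont_frechet_cdf: "0 < \<tau> \<Longrightarrow> 0 < x \<Longrightarrow> isCont (frechet_cdf \<tau> \<alpha>0) x"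
  unfolding frechet_cdf_def by (intro continuous_intros) auto

lemma frechet_cdf_tendsto_0: "0 < \<tau> \<Longrightarrow> 0 < \<alpha>0 \<Longrightarrow> (frechet_cdf \<tau> \<alpha>0 \<longlongrightarrow> 0) (at_right 0)"
  unfolding frechet_cdf_def by real_asymp

lemma powr_neg_inverse_divide:
  fixes x m \<tau> a :: real
  assumes "0 < x" "0 < m" "0 < \<tau>" "0 < a"
  shows "(x / m powr a / \<tau>) powr (- 1 / a) = m * \<tau> powr (1 / a) * x powr (- 1 / a)"
proof -
  have "(x / m powr a / \<tau>) powr (- 1 / a) = x powr (- 1 / a) / ((m powr a) powr (- 1 / a) * \<tau> powr (- 1 / a))"
    using assms by (simp add: powr_divide powr_mult)
  also have "(m powr a) powr (- 1 / a) = 1 / m"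
    using assms by (simp add: powr_powr powr_minus_divide)
  also have "\<tau> powr (- 1 / a) = 1 / \<tau> powr (1 / a)"
    by (metis minus_divide_left powr_minus_divide)
  finally show ?thesis
    using assms by (simp add: field_simps)
qed

section \<open>The tilted stable mixture model\<close>

locale tilted_stable_model = prob_space M
  for M :: "'a measure" +
  fixes \<alpha> \<alpha>0 \<tau> :: real and K ns :: nat
    and \<theta> :: "nat \<Rightarrow> real" and w :: "nat \<Rightarrow> nat \<Rightarrow> real"
    and Z eps :: "nat \<Rightarrow> 'a \<Rightarrow> real"
  assumes alpha_pos: "0 < \<alpha>" and alpha_less_1: "\<alpha> < 1"
    and alpha0_pos: "0 < \<alpha>0" and tau_pos: "0 < \<tau>"
    and theta_pos: "\<forall>k\<in>{1..K}. 0 < \<theta> k"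
    and weights_nonzero: "\<forall>j\<in>{1..ns}. \<exists>k\<in>{1..K}. w k j \<noteq> 0"
    and indep: "indep_vars (\<lambda>_. borel) (case_sum Z eps) (Inl ` {1..K} \<union> Inr ` {1..ns})"
    and Z_pos: "\<forall>k\<in>{1..K}. AE \<omega> in M. 0 < Z k \<omega>"
    and Z_laplace: "\<forall>k\<in>{1..K}. \<forall>s::real. 0 \<le> s \<longrightarrow>
           expectation (\<lambda>\<omega>. exp (- s * Z k \<omega>)) = exp (- ((\<theta> k + s) powr \<alpha> - \<theta> k powr \<alpha>))"
    and eps_cdf: "\<forall>j\<in>{1..ns}. \<forall>x::real. 0 < x \<longrightarrow>
           cdf_rv M (eps j) x = exp (- ((x / \<tau>) powr (- 1 / \<alpha>0)))"
begin

definition scale :: "nat \<Rightarrow> 'a \<Rightarrow> real" where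
  "scale j \<omega> = (\<Sum>k=1..K. w k j powr (1 / \<alpha>) * Z k \<omega>)"

abbreviation X :: "nat \<Rightarrow> 'a \<Rightarrow> real" where
  "X \<equiv> model_X \<alpha> \<alpha>0 K w Z eps"

lemma X_eq: "X j \<omega> = eps j \<omega> * scale j \<omega> powr \<alpha>0"
  by (simp add: model_X_def scale_def)

lemma Z_measurable [measurable]:
  assumes "k \<in> {1..K}" shows "Z k \<in> borel_measurable M"
proof -
  have "case_sum Z eps (Inl k) \<in> borel_measurable M"
    using indep assms unfolding indep_vars_def by blast
  then show ?thesis by simp
qed

lemma eps_measurable [measurable]:
  assumes "j \<in> {1..ns}" shows "eps j \<in> borel_measurable M"
proof -
  have "case_sum Z eps (Inr j) \<in> borel_measurable M"
    using indep assms unfolding indep_vars_def by blast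
  then show ?thesis by simp
qed

lemma scale_measurable [measurable]: "scale j \<in> borel_measurable M"
  unfolding scale_def by measurable

lemma X_measurable [measurable]: "j \<in> {1..ns} \<Longrightarrow> X j \<in> borel_measurable M"
  unfolding X_eq[abs_def] by measurable

lemma indep_eps_eps:
  assumes "i \<in> {1..ns}" "j \<in> {1..ns}" "i \<noteq> j"
  shows "indep_var borel (eps i) borel (eps j)"
proof -
  let ?restr = "\<lambda>A \<omega>. restrict (\<lambda>x. case_sum Z eps x \<omega>) A"
  have "indep_var borel ((\<lambda>f. f (Inr i)) \<circ> ?restr {Inr i}) borel ((\<lambda>f. f (Inr j)) \<circ> ?restr {Inr j})"
    using assms
    by (intro indep_var_compose[OF indep_var_restrict[OF indep]] measurable_component_singleton) auto
  then show ?thesis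
    by (simp add: comp_def)
qed

lemma indep_scale_eps:
  assumes "j \<in> {1..ns}"
  shows "indep_var borel (scale j) borel (eps j)"
proof -
  let ?restr = "\<lambda>A \<omega>. restrict (\<lambda>x. case_sum Z eps x \<omega>) A"
  let ?A = "Inl ` {1..K} :: (nat + nat) set"
  let ?scale = "\<lambda>f. \<Sum>k=1..K. w k j powr (1 / \<alpha>) * f (Inl k)"
  have "?scale \<in> borel_measurable (PiM ?A (\<lambda>_. borel))"
    by (intro borel_measurable_sum borel_measurable_times borel_measurable_const
        measurable_component_singleton) auto
  then have "indep_var borel (?scale \<circ> ?restr ?A) borel ((\<lambda>f. f (Inr j)) \<circ> ?restr {Inr j})"
    using assms
    by (intro indep_var_compose[OF indep_var_restrict[OF indep]] measurable_component_singleton) auto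
  moreover have "?scale \<circ> ?restr ?A = scale j"
    by (auto simp: fun_eq_iff scale_def intro!: sum.cong)
  ultimately show ?thesis
    by (simp add: comp_def)
qed

lemma eps_cdf_frechet: "j \<in> {1..ns} \<Longrightarrow> 0 < x \<Longrightarrow> cdf_rv M (eps j) x = frechet_cdf \<tau> \<alpha>0 x"
  using eps_cdf by (simp add: frechet_cdf_def)

lemma eps_tail:
  assumes "j \<in> {1..ns}" "0 < x"
  shows "prob {\<omega>\<in>space M. x < eps j \<omega>} = 1 - frechet_cdf \<tau> \<alpha>0 x"
proof -
  have "{\<omega>\<in>space M. x < eps j \<omega>} = space M - {\<omega>\<in>space M. eps j \<omega> \<le> x}"
    by auto
  then show ?thesis
    using assms eps_cdf_frechet[OF assms] by (simp add: prob_compl cdf_rv_def)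
qed

lemma eps_cdf_0:
  assumes j: "j \<in> {1..ns}"
  shows "cdf_rv M (eps j) 0 = 0"
proof -
  interpret D: real_distribution "distr M borel (eps j)"
    using j by simp
  have "eventually (\<lambda>x. frechet_cdf \<tau> \<alpha>0 x = cdf_rv M (eps j) x) (at_right 0)"
    using eventually_at_right_less[of 0] by eventually_elim (simp add: eps_cdf_frechet[OF j])
  then have "(cdf_rv M (eps j) \<longlongrightarrow> 0) (at_right 0)"
    using frechet_cdf_tendsto_0[OF tau_pos alpha0_pos] tendsto_cong by blast
  moreover have "(cdf_rv M (eps j) \<longlongrightarrow> cdf_rv M (eps j) 0) (at_right 0)"
    using D.cdf_is_right_cont by (simp add: continuous_within cdf_distr_eq_cdf_rv[OF eps_measurable[OF j]])
  ultimately show ?thesis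
    using tendsto_unique by force
qed

lemma eps_atomless:
  assumes j: "j \<in> {1..ns}"
  shows "prob {\<omega>\<in>space M. eps j \<omega> = c} = 0"
proof -
  let ?D = "distr M borel (eps j)"
  interpret D: real_distribution ?D
    using j by simp
  have "measure ?D {c} = 0"
  proof (cases "c > 0")
    case True
    have "eventually (\<lambda>x. x > 0) (nhds c)"
      using True by (intro eventually_nhds_in_open[of "{0<..}", simplified]) auto
    then have "eventually (\<lambda>x. cdf ?D x = frechet_cdf \<tau> \<alpha>0 x) (nhds c)"
      by eventually_elim (simp add: cdf_distr_eq_cdf_rv[OF eps_measurable[OF j]] eps_cdf_frechet[OF j])
    then have "isCont (cdf ?D) c"
      using isCont_cong isCont_frechet_cdf[OF tau_pos True] by blast
    then show ?thesis
      using D.isCont_cdf by simp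
  next
    case False
    have "measure ?D {c} \<le> cdf ?D 0"
      using False unfolding cdf_def by (intro D.finite_measure_mono) auto
    then show ?thesis
      using eps_cdf_0[OF j] by (simp add: antisym cdf_distr_eq_cdf_rv[OF eps_measurable[OF j]])
  qed
  then show ?thesis
    using j by (simp add: measure_distr vimage_def Int_def conj_commute)
qed

lemma eps_pos:
  assumes j: "j \<in> {1..ns}"
  shows "AE \<omega> in M. 0 < eps j \<omega>"
proof -
  have "{\<omega> \<in> space M. eps j \<omega> \<le> 0} \<in> events"
    using j by measurable
  then show ?thesis
    using eps_cdf_0[OF j] by (simp add: prob_Collect_eq_0 cdf_rv_def not_le)
qed

lemma scale_pos:
  assumes j: "j \<in> {1..ns}"
  shows "AE \<omega> in M. 0 < scale j \<omega>"
proof -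
  obtain k0 where k0: "k0 \<in> {1..K}" "w k0 j \<noteq> 0"
    using weights_nonzero j by blast
  have "AE \<omega> in M. \<forall>k\<in>{1..K}. 0 < Z k \<omega>"
    using Z_pos by (intro AE_finite_allI) auto
  then show ?thesis
  proof eventually_elim
    case (elim \<omega>)
    have "0 < w k0 j powr (1 / \<alpha>) * Z k0 \<omega>"
      using k0 elim by simp
    moreover have "0 \<le> w k j powr (1 / \<alpha>) * Z k \<omega>" if "k \<in> {1..K}" for k
      using elim that by (simp add: less_imp_le)
    ultimately show ?case
      unfolding scale_def by (rule sum_pos2[OF finite_atLeastAtMost k0(1)])
  qed
qed

lemma X_pos:
  assumes "j \<in> {1..ns}"
  shows "AE \<omega> in M. 0 < X j \<omega>"
  using scale_pos[OF assms] eps_pos[OF assms] by eventually_elim (simp add: X_eq)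

lemma X_atomless:
  assumes j: "j \<in> {1..ns}"
  shows "prob {\<omega>\<in>space M. X j \<omega> = c} = 0"
proof (cases "c > 0")
  case True
  have "indep_var borel ((\<lambda>s. s powr \<alpha>0) \<circ> scale j) borel ((\<lambda>x. x) \<circ> eps j)"
    by (rule indep_var_compose[OF indep_scale_eps[OF j]]) simp_all
  then have "indep_var borel (\<lambda>\<omega>. scale j \<omega> powr \<alpha>0) borel (eps j)"
    by (simp add: comp_def)
  from prob_indep_mult_atomless[OF this eps_atomless[OF j]] True show ?thesis
    by (simp add: X_eq)
next
  case False
  then show ?thesis
    using X_pos[OF j] by (intro prob_eq_0_AE) auto
qed

definition quantile :: "nat \<Rightarrow> real \<Rightarrow> real" where
  "quantile j t = gen_inv (cdf_rv M (X j)) (1 - 1 / t)"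

lemma cdf_quantile:
  assumes "j \<in> {1..ns}" "1 < t"
  shows "cdf_rv M (X j) (quantile j t) = 1 - 1 / t"
  unfolding quantile_def using assms X_atomless by (intro cdf_rv_gen_inv) auto

lemma quantile_pos:
  assumes j: "j \<in> {1..ns}" and t: "1 < t"
  shows "0 < quantile j t"
proof (rule ccontr)
  assume "\<not> 0 < quantile j t"
  then have "cdf_rv M (X j) (quantile j t) \<le> prob {\<omega>\<in>space M. X j \<omega> \<le> 0}"
    unfolding cdf_rv_def using j by (intro finite_measure_mono) auto
  also have "\<dots> = 0"
    using X_pos[OF j] by (intro prob_eq_0_AE) auto
  finally show False
    using cdf_quantile[OF j t] t by simp
qed

lemma X_tail_quantile:
  assumes "j \<in> {1..ns}" "1 < t"
  shows "prob {\<omega>\<in>space M. quantile j t < X j \<omega>} = 1 / t"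
proof -
  have "{\<omega>\<in>space M. quantile j t < X j \<omega>} = space M - {\<omega>\<in>space M. X j \<omega> \<le> quantile j t}"
    by auto
  then show ?thesis
    using assms cdf_quantile[OF assms] by (simp add: prob_compl cdf_rv_def)
qed

lemma X_tail_ge_scale_eps:
  assumes j: "j \<in> {1..ns}" and "0 < s" "0 < x"
  shows "prob {\<omega>\<in>space M. s \<le> scale j \<omega>} * (1 - frechet_cdf \<tau> \<alpha>0 (x / s powr \<alpha>0))
    \<le> prob {\<omega>\<in>space M. x < X j \<omega>}"
proof -
  let ?a = "s powr \<alpha>0"
  have "0 < ?a"
    using \<open>0 < s\<close> by simp
  have "prob {\<omega>\<in>space M. s \<le> scale j \<omega>} * (1 - frechet_cdf \<tau> \<alpha>0 (x / ?a))
      = prob {\<omega>\<in>space M. scale j \<omega> \<in> {s..} \<and> eps j \<omega> \<in> {x / ?a<..}}"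
    using prob_indep_var_conj[OF indep_scale_eps[OF j], of "{s..}" "{x / ?a<..}"] eps_tail[OF j, of "x / ?a"]
      \<open>0 < x\<close> \<open>0 < ?a\<close> by simp
  also have "\<dots> \<le> prob {\<omega>\<in>space M. x < X j \<omega>}"
  proof (rule finite_measure_mono)
    show "{\<omega>\<in>space M. scale j \<omega> \<in> {s..} \<and> eps j \<omega> \<in> {x / ?a<..}} \<subseteq> {\<omega>\<in>space M. x < X j \<omega>}"
    proof safe
      fix \<omega> assume \<omega>: "\<omega> \<in> space M" "s \<le> scale j \<omega>" "x / ?a < eps j \<omega>"
      then have "x < eps j \<omega> * ?a"
        using \<open>0 < ?a\<close> by (simp add: field_simps)
      moreover from this have "0 < eps j \<omega>"
        using \<open>0 < ?a\<close> \<open>0 < x\<close> by (smt (verit) mult_nonpos_nonneg)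
      moreover have "?a \<le> scale j \<omega> powr \<alpha>0"
        using \<omega>(2) \<open>0 < s\<close> alpha0_pos by (intro powr_mono2) auto
      ultimately show "x < X j \<omega>"
        by (smt (verit) X_eq mult_left_mono)
    qed
  qed (use j in measurable)
  finally show ?thesis .
qed

lemma X_tail_lower:
  assumes j: "j \<in> {1..ns}"
  obtains c x0 where "0 < c" "0 < x0"
    "\<And>x. x0 \<le> x \<Longrightarrow> c * x powr (- 1 / \<alpha>0) \<le> prob {\<omega>\<in>space M. x < X j \<omega>}"
proof -
  obtain s where s: "0 < s" "0 < prob {\<omega>\<in>space M. s \<le> scale j \<omega>}"
    using AE_pos_imp_prob_ge_pos[OF scale_measurable scale_pos[OF j]] by blast
  define p where "p = prob {\<omega>\<in>space M. s \<le> scale j \<omega>}"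
  define a where "a = s powr \<alpha>0"
  define c where "c = p / 2 * (1 / (a * \<tau>)) powr (- 1 / \<alpha>0)"
  have "0 < a" "0 < c" "0 < a * \<tau>"
    using s tau_pos by (simp_all add: a_def c_def p_def)
  moreover have "c * x powr (- 1 / \<alpha>0) \<le> prob {\<omega>\<in>space M. x < X j \<omega>}" if "a * \<tau> \<le> x" for x
  proof -
    have "0 < x" "\<tau> \<le> x / a"
      using that \<open>0 < a\<close> \<open>0 < a * \<tau>\<close> by (auto simp: field_simps)
    have "c * x powr (- 1 / \<alpha>0) = p * ((x / a / \<tau>) powr (- 1 / \<alpha>0) / 2)"
      using \<open>0 < x\<close> \<open>0 < a\<close> tau_pos by (simp add: c_def powr_mult[symmetric] mult_ac)
    also have "\<dots> \<le> p * (1 - frechet_cdf \<tau> \<alpha>0 (x / a))"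
      using frechet_tail_ge[OF tau_pos alpha0_pos \<open>\<tau> \<le> x / a\<close>] by (intro mult_left_mono) (auto simp: p_def)
    also have "\<dots> \<le> prob {\<omega>\<in>space M. x < X j \<omega>}"
      using X_tail_ge_scale_eps[OF j \<open>0 < s\<close> \<open>0 < x\<close>] by (simp add: p_def a_def)
    finally show ?thesis .
  qed
  ultimately show thesis
    using that by blast
qed

lemma quantile_powr_le:
  assumes j: "j \<in> {1..ns}"
  obtains c where "0 < c" "eventually (\<lambda>t. c * quantile j t powr (- 1 / \<alpha>0) \<le> 1 / t) at_top"
proof -
  obtain c x0 where c: "0 < c" "0 < x0" "\<And>x. x0 \<le> x \<Longrightarrow> c * x powr (- 1 / \<alpha>0) \<le> prob {\<omega>\<in>space M. x < X j \<omega>}"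
    using X_tail_lower[OF j] by blast
  define b where "b = c * x0 powr (- 1 / \<alpha>0)"
  have "c * quantile j t powr (- 1 / \<alpha>0) \<le> 1 / t" if t: "1 < t" "1 / t < b" for t
  proof -
    have "x0 \<le> quantile j t"
    proof (rule ccontr)
      assume "\<not> x0 \<le> quantile j t"
      then have "prob {\<omega>\<in>space M. x0 < X j \<omega>} \<le> prob {\<omega>\<in>space M. quantile j t < X j \<omega>}"
        using j by (intro finite_measure_mono) auto
      then show False
        using c(3)[of x0] X_tail_quantile[OF j t(1)] t(2) by (simp add: b_def)
    qed
    then show ?thesis
      using c(3)[of "quantile j t"] X_tail_quantile[OF j t(1)] by simp
  qed
  moreover have "0 < b"
    using c by (simp add: b_def)
  then have "eventually (\<lambda>t. 1 / t < b) at_top"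
    by (rule order_tendstoD(2)[OF tendsto_divide_0[OF tendsto_const
          filterlim_at_top_imp_at_infinity[OF filterlim_ident]]])
  then have "eventually (\<lambda>t. 1 < t \<and> 1 / t < b) at_top"
    using eventually_gt_at_top[of 1] by eventually_elim simp
  ultimately have "eventually (\<lambda>t. c * quantile j t powr (- 1 / \<alpha>0) \<le> 1 / t) at_top"
    by (auto elim!: eventually_mono)
  with c(1) show thesis
    by (rule that)
qed

lemma Z_square_integrable:
  assumes k: "k \<in> {1..K}"
  shows "integrable M (\<lambda>\<omega>. (Z k \<omega>)\<^sup>2)"
proof -
  obtain C where "\<And>s. 0 < s \<Longrightarrow>
      1 - 2 * exp (- ((\<theta> k + s) powr \<alpha> - \<theta> k powr \<alpha>)) + exp (- ((\<theta> k + 2 * s) powr \<alpha> - \<theta> k powr \<alpha>))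
        \<le> C * s\<^sup>2"
    using tilted_stable_laplace_second_difference[of "\<theta> k" \<alpha>] theta_pos k alpha_pos alpha_less_1 by auto
  moreover have "AE \<omega> in M. 0 \<le> Z k \<omega>"
    using Z_pos k by (metis (mono_tags, lifting) eventually_mono less_imp_le)
  ultimately show ?thesis
    using k Z_laplace
    by (intro integrable_square_of_laplace_second_difference[where L="\<lambda>s. exp (- ((\<theta> k + s) powr \<alpha> - \<theta> k powr \<alpha>))"])
       auto
qed

lemma scale_square_integrable: "integrable M (\<lambda>\<omega>. (scale j \<omega>)\<^sup>2)"
proof (rule Bochner_Integration.integrable_bound)
  show "integrable M (\<lambda>\<omega>. real K * (\<Sum>k=1..K. (w k j powr (1 / \<alpha>))\<^sup>2 * (Z k \<omega>)\<^sup>2))"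
    using Z_square_integrable by (intro integrable_mult_right integrable_sum integrable_mult_right) auto
  show "AE \<omega> in M. norm ((scale j \<omega>)\<^sup>2) \<le> norm (real K * (\<Sum>k=1..K. (w k j powr (1 / \<alpha>))\<^sup>2 * (Z k \<omega>)\<^sup>2))"
  proof (intro AE_I2)
    fix \<omega>
    have "(scale j \<omega>)\<^sup>2 \<le> (\<Sum>k=1..K. (w k j powr (1 / \<alpha>) * Z k \<omega>)\<^sup>2) * real (card {1..K})"
      unfolding scale_def by (rule sum_squared_le_sum_of_squares)
    then show "norm ((scale j \<omega>)\<^sup>2) \<le> norm (real K * (\<Sum>k=1..K. (w k j powr (1 / \<alpha>))\<^sup>2 * (Z k \<omega>)\<^sup>2))"
      by (simp add: power_mult_distrib mult.commute sum_nonneg)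
  qed
qed measurable

lemma scale_square_tail: "((\<lambda>r. r\<^sup>2 * prob {\<omega>\<in>space M. r < scale j \<omega>}) \<longlongrightarrow> 0) at_top"
  by (rule square_tail_tendsto_zero[OF scale_measurable scale_square_integrable])

lemma eps_tail_le:
  assumes "j \<in> {1..ns}" "0 < c" "0 < m"
  shows "prob {\<omega>\<in>space M. c / m powr \<alpha>0 < eps j \<omega>} \<le> m * \<tau> powr (1 / \<alpha>0) * c powr (- 1 / \<alpha>0)"
proof -
  have "prob {\<omega>\<in>space M. c / m powr \<alpha>0 < eps j \<omega>} = 1 - frechet_cdf \<tau> \<alpha>0 (c / m powr \<alpha>0)"
    using assms by (intro eps_tail) auto
  also have "\<dots> \<le> (c / m powr \<alpha>0 / \<tau>) powr (- 1 / \<alpha>0)"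
    by (rule frechet_tail_le)
  also have "\<dots> = m * \<tau> powr (1 / \<alpha>0) * c powr (- 1 / \<alpha>0)"
    using assms tau_pos alpha0_pos by (intro powr_neg_inverse_divide)
  finally show ?thesis .
qed

lemma joint_exceedance_le:
  assumes i: "i \<in> {1..ns}" and j: "j \<in> {1..ns}" and "i \<noteq> j"
    and "0 < a" "0 < b" "0 < m"
  shows "prob {\<omega>\<in>space M. a < X i \<omega> \<and> b < X j \<omega>}
    \<le> prob {\<omega>\<in>space M. m < scale i \<omega>} + prob {\<omega>\<in>space M. m < scale j \<omega>}
      + (m * \<tau> powr (1 / \<alpha>0) * a powr (- 1 / \<alpha>0)) * (m * \<tau> powr (1 / \<alpha>0) * b powr (- 1 / \<alpha>0))"
proof -
  let ?Si = "{\<omega>\<in>space M. m < scale i \<omega>}" and ?Sj = "{\<omega>\<in>space M. m < scale j \<omega>}"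
  let ?E = "{\<omega>\<in>space M. eps i \<omega> \<in> {a / m powr \<alpha>0<..} \<and> eps j \<omega> \<in> {b / m powr \<alpha>0<..}}"
  \<comment> \<open>Unless a scale exceeds \<open>m\<close>, both exceedances must come from the independent noises.\<close>
  have eps_exceeds: "c / m powr \<alpha>0 < eps l \<omega>"
    if "0 < c" "c < X l \<omega>" "0 < scale l \<omega>" "scale l \<omega> \<le> m" for c l \<omega>
  proof -
    have "0 < scale l \<omega> powr \<alpha>0" "scale l \<omega> powr \<alpha>0 \<le> m powr \<alpha>0"
      using that alpha0_pos by (auto intro!: powr_mono2)
    moreover have "c < eps l \<omega> * scale l \<omega> powr \<alpha>0"
      using that by (simp add: X_eq)
    ultimately have "c < eps l \<omega> * m powr \<alpha>0"
      using \<open>0 < c\<close> by (smt (verit) mult_left_mono mult_nonpos_nonneg)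
    then show ?thesis
      using \<open>0 < m\<close> by (simp add: field_simps)
  qed
  have "AE \<omega> in M. (a < X i \<omega> \<and> b < X j \<omega>)
      \<longleftrightarrow> (a < X i \<omega> \<and> b < X j \<omega> \<and> 0 < scale i \<omega> \<and> 0 < scale j \<omega>)"
    using scale_pos[OF i] scale_pos[OF j] by eventually_elim auto
  then have "prob {\<omega>\<in>space M. a < X i \<omega> \<and> b < X j \<omega>}
      = prob {\<omega>\<in>space M. a < X i \<omega> \<and> b < X j \<omega> \<and> 0 < scale i \<omega> \<and> 0 < scale j \<omega>}"
    by (rule prob_eq_AE) (use i j in measurable)
  also have "\<dots> \<le> prob (?Si \<union> ?Sj \<union> ?E)"
    using eps_exceeds[of a i] eps_exceeds[of b j] \<open>0 < a\<close> \<open>0 < b\<close> i j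
    by (intro finite_measure_mono) (auto simp: not_less)
  also have "\<dots> \<le> prob ?Si + prob ?Sj + prob ?E"
    using i j by (intro order_trans[OF measure_Un_le] add_right_mono measure_Un_le) auto
  also have "prob ?E = prob {\<omega>\<in>space M. a / m powr \<alpha>0 < eps i \<omega>} * prob {\<omega>\<in>space M. b / m powr \<alpha>0 < eps j \<omega>}"
    using prob_indep_var_conj[OF indep_eps_eps[OF assms(1-3)], of "{a / m powr \<alpha>0<..}" "{b / m powr \<alpha>0<..}"]
    by simp
  also have "\<dots> \<le> (m * \<tau> powr (1 / \<alpha>0) * a powr (- 1 / \<alpha>0)) * (m * \<tau> powr (1 / \<alpha>0) * b powr (- 1 / \<alpha>0))"
    using assms by (intro mult_mono eps_tail_le) auto
  finally show ?thesis
    by simp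
qed

lemma joint_exceedance_quantile_le:
  assumes i: "i \<in> {1..ns}" and j: "j \<in> {1..ns}" and "i \<noteq> j"
  obtains B where "0 \<le> B"
    "\<And>d. 0 < d \<Longrightarrow> eventually (\<lambda>t. t * prob {\<omega>\<in>space M. quantile i t < X i \<omega> \<and> quantile j t < X j \<omega>}
        \<le> ((d * sqrt t)\<^sup>2 * prob {\<omega>\<in>space M. d * sqrt t < scale i \<omega>}
          + (d * sqrt t)\<^sup>2 * prob {\<omega>\<in>space M. d * sqrt t < scale j \<omega>}) / d\<^sup>2 + B * d\<^sup>2) at_top"
proof -
  obtain ci where ci: "0 < ci" "eventually (\<lambda>t. ci * quantile i t powr (- 1 / \<alpha>0) \<le> 1 / t) at_top"
    using quantile_powr_le[OF i] by blast
  obtain cj where cj: "0 < cj" "eventually (\<lambda>t. cj * quantile j t powr (- 1 / \<alpha>0) \<le> 1 / t) at_top"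
    using quantile_powr_le[OF j] by blast
  define T where "T = \<tau> powr (1 / \<alpha>0)"
  define B where "B = T\<^sup>2 / (ci * cj)"
  have "0 \<le> B"
    using ci cj by (simp add: B_def)
  moreover have "eventually (\<lambda>t. t * prob {\<omega>\<in>space M. quantile i t < X i \<omega> \<and> quantile j t < X j \<omega>}
        \<le> ((d * sqrt t)\<^sup>2 * prob {\<omega>\<in>space M. d * sqrt t < scale i \<omega>}
          + (d * sqrt t)\<^sup>2 * prob {\<omega>\<in>space M. d * sqrt t < scale j \<omega>}) / d\<^sup>2 + B * d\<^sup>2) at_top"
    if "0 < d" for d
    using eventually_gt_at_top[of 1] ci(2) cj(2)
  proof eventually_elim
    case (elim t)
    define m where "m = d * sqrt t"
    have "0 < m" "m\<^sup>2 = d\<^sup>2 * t"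
      using \<open>0 < d\<close> elim(1) by (simp_all add: m_def power_mult_distrib)
    let ?qi = "quantile i t powr (- 1 / \<alpha>0)" and ?qj = "quantile j t powr (- 1 / \<alpha>0)"
    have "t * (m * T * ?qi) * (m * T * ?qj) = m\<^sup>2 * T\<^sup>2 * (t * ?qi * ?qj)"
      by (simp add: power2_eq_square mult_ac)
    also have "\<dots> \<le> m\<^sup>2 * T\<^sup>2 * (t * (1 / (ci * t)) * (1 / (cj * t)))"
      using elim ci(1) cj(1) by (intro mult_left_mono mult_mono) (auto simp: field_simps)
    also have "\<dots> = B * d\<^sup>2"
      using \<open>m\<^sup>2 = d\<^sup>2 * t\<close> elim(1) by (simp add: B_def field_simps power2_eq_square)
    finally have noise: "t * (m * T * ?qi) * (m * T * ?qj) \<le> B * d\<^sup>2" .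
    have "t * prob {\<omega>\<in>space M. quantile i t < X i \<omega> \<and> quantile j t < X j \<omega>}
        \<le> t * (prob {\<omega>\<in>space M. m < scale i \<omega>} + prob {\<omega>\<in>space M. m < scale j \<omega>}
          + m * T * ?qi * (m * T * ?qj))"
      using joint_exceedance_le[OF assms quantile_pos[OF i elim(1)] quantile_pos[OF j elim(1)] \<open>0 < m\<close>]
        elim(1) by (intro mult_left_mono) (auto simp: T_def)
    also have "\<dots> = (d\<^sup>2 * t * prob {\<omega>\<in>space M. m < scale i \<omega>}
          + d\<^sup>2 * t * prob {\<omega>\<in>space M. m < scale j \<omega>}) / d\<^sup>2 + t * (m * T * ?qi) * (m * T * ?qj)"
      using \<open>0 < d\<close> by (simp add: field_simps)
    also have "\<dots> \<le> (d\<^sup>2 * t * prob {\<omega>\<in>space M. m < scale i \<omega>}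
          + d\<^sup>2 * t * prob {\<omega>\<in>space M. m < scale j \<omega>}) / d\<^sup>2 + B * d\<^sup>2"
      using noise by simp
    finally show ?case
      using \<open>m\<^sup>2 = d\<^sup>2 * t\<close> by (simp add: m_def)
  qed
  ultimately show thesis
    by (rule that)
qed

lemma joint_exceedance_quantile_tendsto:
  assumes i: "i \<in> {1..ns}" and j: "j \<in> {1..ns}" and "i \<noteq> j"
  shows "((\<lambda>t. t * prob {\<omega>\<in>space M. quantile i t < X i \<omega> \<and> quantile j t < X j \<omega>}) \<longlongrightarrow> 0) at_top"
proof (rule tendstoI)
  fix e :: real assume "0 < e"
  obtain B where "0 \<le> B" and bound: "\<And>d. 0 < d \<Longrightarrow> eventually (\<lambda>t. t * prob {\<omega>\<in>space M. quantile i t < X i \<omega> \<and> quantile j t < X j \<omega>}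
        \<le> ((d * sqrt t)\<^sup>2 * prob {\<omega>\<in>space M. d * sqrt t < scale i \<omega>}
          + (d * sqrt t)\<^sup>2 * prob {\<omega>\<in>space M. d * sqrt t < scale j \<omega>}) / d\<^sup>2 + B * d\<^sup>2) at_top"
    using joint_exceedance_quantile_le[OF assms] by blast
  define d where "d = sqrt (e / (2 * (B + 1)))"
  have "0 < d" "B * d\<^sup>2 < e / 2"
    using \<open>0 < e\<close> \<open>0 \<le> B\<close> by (auto simp: d_def field_simps)
  have "filterlim (\<lambda>t. d * sqrt t) at_top at_top"
    using \<open>0 < d\<close> by real_asymp
  then have scale_small: "eventually (\<lambda>t. (d * sqrt t)\<^sup>2 * prob {\<omega>\<in>space M. d * sqrt t < scale l \<omega>} < d\<^sup>2 * e / 4) at_top"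
    for l
    using \<open>0 < d\<close> \<open>0 < e\<close> by (intro order_tendstoD(2)[OF filterlim_compose[OF scale_square_tail]]) auto
  show "eventually (\<lambda>t. dist (t * prob {\<omega>\<in>space M. quantile i t < X i \<omega> \<and> quantile j t < X j \<omega>}) 0 < e) at_top"
    using scale_small[of i] scale_small[of j] bound[OF \<open>0 < d\<close>] eventually_gt_at_top[of 0]
  proof eventually_elim
    case (elim t)
    let ?u = "(d * sqrt t)\<^sup>2 * prob {\<omega>\<in>space M. d * sqrt t < scale i \<omega>}"
    let ?v = "(d * sqrt t)\<^sup>2 * prob {\<omega>\<in>space M. d * sqrt t < scale j \<omega>}"
    have "(?u + ?v) / d\<^sup>2 < (d\<^sup>2 * e / 2) / d\<^sup>2"
      using elim(1,2) \<open>0 < d\<close> by (intro divide_strict_right_mono) auto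
    then have "(?u + ?v) / d\<^sup>2 < e / 2"
      using \<open>0 < d\<close> by simp
    then have "t * prob {\<omega>\<in>space M. quantile i t < X i \<omega> \<and> quantile j t < X j \<omega>} < e"
      using elim(3) \<open>B * d\<^sup>2 < e / 2\<close> by linarith
    then show ?case
      using elim(4) by simp
  qed
qed

definition exceedance :: "nat \<Rightarrow> real \<Rightarrow> 'a set" where
  "exceedance j t = {\<omega>\<in>space M. quantile j t < X j \<omega>}"

lemma exceedance_events [measurable]: "j \<in> {1..ns} \<Longrightarrow> exceedance j t \<in> events"
  unfolding exceedance_def by measurable

lemma exceedance_Int:
  "exceedance i t \<inter> exceedance j t = {\<omega>\<in>space M. quantile i t < X i \<omega> \<and> quantile j t < X j \<omega>}"
  by (auto simp: exceedance_def)

lemma joint_cdf_quantile: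
  "1 - joint_cdf M X ns (\<lambda>j. quantile j t) = prob (\<Union>j\<in>{1..ns}. exceedance j t)"
proof -
  have "joint_cdf M X ns (\<lambda>j. quantile j t) = prob (space M - (\<Union>j\<in>{1..ns}. exceedance j t))"
    unfolding joint_cdf_def exceedance_def by (auto intro!: arg_cong[where f=prob])
  also have "\<dots> = 1 - prob (\<Union>j\<in>{1..ns}. exceedance j t)"
    by (intro prob_compl) auto
  finally show ?thesis
    by simp
qed

lemma prob_exceedance_union_bounds:
  assumes "1 < t"
  shows "real ns / t - (\<Sum>i\<in>{1..ns}. \<Sum>j\<in>{1..ns}-{i}. prob (exceedance i t \<inter> exceedance j t))
      \<le> prob (\<Union>j\<in>{1..ns}. exceedance j t)"
    and "prob (\<Union>j\<in>{1..ns}. exceedance j t) \<le> real ns / t"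
proof -
  have sum: "(\<Sum>j\<in>{1..ns}. prob (exceedance j t)) = real ns / t"
    using X_tail_quantile assms by (simp add: exceedance_def)
  from prob_UN_Bonferroni[of "{1..ns}" "\<lambda>j. exceedance j t"]
  show "real ns / t - (\<Sum>i\<in>{1..ns}. \<Sum>j\<in>{1..ns}-{i}. prob (exceedance i t \<inter> exceedance j t))
      \<le> prob (\<Union>j\<in>{1..ns}. exceedance j t)"
    unfolding sum by simp
  have "(\<lambda>j. exceedance j t) ` {1..ns} \<subseteq> events"
    using exceedance_events by blast
  from finite_measure_subadditive_finite[OF _ this]
  show "prob (\<Union>j\<in>{1..ns}. exceedance j t) \<le> real ns / t"
    unfolding sum by simp
qed

lemma extremal_coefficient:
  "((\<lambda>t. t * (1 - joint_cdf M X ns (\<lambda>j. quantile j t))) \<longlongrightarrow> real ns) at_top"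
proof -
  let ?pairs = "\<lambda>t. \<Sum>i\<in>{1..ns}. \<Sum>j\<in>{1..ns}-{i}. t * prob (exceedance i t \<inter> exceedance j t)"
  have "(?pairs \<longlongrightarrow> (\<Sum>i\<in>{1..ns}. \<Sum>j\<in>{1..ns}-{i}. 0)) at_top"
  proof (intro tendsto_sum)
    fix i j assume "i \<in> {1..ns}" "j \<in> {1..ns} - {i}"
    then show "((\<lambda>t. t * prob (exceedance i t \<inter> exceedance j t)) \<longlongrightarrow> 0) at_top"
      unfolding exceedance_Int by (intro joint_exceedance_quantile_tendsto) auto
  qed
  from tendsto_diff[OF tendsto_const this]
  have lim: "((\<lambda>t. real ns - ?pairs t) \<longlongrightarrow> real ns) at_top"
    by simp
  have lower: "eventually (\<lambda>t. real ns - ?pairs t \<le> t * prob (\<Union>j\<in>{1..ns}. exceedance j t)) at_top"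
    using eventually_gt_at_top[of 1]
  proof eventually_elim
    case (elim t)
    then show ?case
      using mult_left_mono[OF prob_exceedance_union_bounds(1)[OF elim], of t]
      by (simp add: sum_distrib_left right_diff_distrib)
  qed
  have upper: "eventually (\<lambda>t. t * prob (\<Union>j\<in>{1..ns}. exceedance j t) \<le> real ns) at_top"
    using eventually_gt_at_top[of 1]
  proof eventually_elim
    case (elim t)
    then show ?case
      using prob_exceedance_union_bounds(2)[OF elim] by (simp add: field_simps)
  qed
  show ?thesis
    unfolding joint_cdf_quantile by (rule tendsto_sandwich[OF lower upper lim tendsto_const])
qed

end

theorem mainTheorem7:
  fixes M :: "'a measure"
    and \<alpha> \<alpha>0 \<tau> :: real and K ns :: nat
    and \<theta> :: "nat \<Rightarrow> real" and w :: "nat \<Rightarrow> nat \<Rightarrow> real"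
    and Z eps :: "nat \<Rightarrow> 'a \<Rightarrow> real"
  assumes "prob_space M"
    and "0 < \<alpha>" "\<alpha> < 1" "0 < \<alpha>0" "0 < \<tau>" "1 \<le> K"
    and "\<forall>k\<in>{1..K}. 0 < \<theta> k"
    and "\<forall>k\<in>{1..K}. \<forall>j\<in>{1..ns}. 0 \<le> w k j"
    and "\<forall>j\<in>{1..ns}. \<exists>k\<in>{1..K}. w k j \<noteq> 0"
    and "prob_space.indep_vars M (\<lambda>_. borel) (case_sum Z eps) (Inl ` {1..K} \<union> Inr ` {1..ns})"
    and "\<forall>k\<in>{1..K}. AE \<omega> in M. 0 < Z k \<omega>"
    and "\<forall>k\<in>{1..K}. \<forall>s::real. 0 \<le> s \<longrightarrow>
           prob_space.expectation M (\<lambda>\<omega>. exp (- s * Z k \<omega>))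
             = exp (- ((\<theta> k + s) powr \<alpha> - \<theta> k powr \<alpha>))"
    and "\<forall>j\<in>{1..ns}. \<forall>x::real. 0 < x \<longrightarrow>
           cdf_rv M (eps j) x = exp (- ((x / \<tau>) powr (- 1 / \<alpha>0)))"
  shows "((\<lambda>t. t * (1 - joint_cdf M (model_X \<alpha> \<alpha>0 K w Z eps) ns
              (\<lambda>j. gen_inv (cdf_rv M (model_X \<alpha> \<alpha>0 K w Z eps j)) (1 - 1 / t))))
          \<longlongrightarrow> real ns) at_top"
proof -
  interpret tilted_stable_model M \<alpha> \<alpha>0 \<tau> K ns \<theta> w Z eps
    by (intro tilted_stable_model.intro tilted_stable_model_axioms.intro assms(1)) (fact assms)+
  show ?thesis
    using extremal_coefficient by (simp add: quantile_def)
qed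

end
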